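(* The Krull dimension of $\mathcal{A}(\bm{p})$ is infinite: for every $N\in\mathbb{N}$ there is a strictly decreasing chain $P_{N+1}\subsetneq P_N\subsetneq\cdots\subsetneq P_1$ of proper prime ideals of $\mathcal{A}(\bm{p})$.
   Context: Fix $\bm{p}:\mathbb{N}_0\to(0,\infty)$ with $\lim_{n\to\infty}\bm{p}(n)^{1/n}=\infty$. For an entire function $f$ write $f(z)=\sum_{n\ge0}\widehat f(n)z^n$. $\mathcal{A}(\bm{p})$ is the set of entire functions $f$ with $\sup_{n\ge 0}\bm{p}(n)|\widehat f(n)|<\infty$, with pointwise addition and scalar multiplication and the weighted Hadamard product $(f\ast g)(z)=\sum_{n\ge0}\bm{p}(n)\widehat f(n)\widehat g(n)z^n$; it is a commutative unital ring. The Krull dimension of a commutative ring is the supremum of lengths of chains of distinct proper prime ideals. *)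

theory Defs
  imports "HOL-Complex_Analysis.Complex_Analysis" "HOL-Algebra.QuotRing"
begin

definition taylor_coeff :: "(complex \<Rightarrow> complex) \<Rightarrow> nat \<Rightarrow> complex" where
  "taylor_coeff f n = (deriv ^^ n) f 0 / of_nat (fact n)"

definition A_carrier :: "(nat \<Rightarrow> real) \<Rightarrow> (complex \<Rightarrow> complex) set" where
  "A_carrier p = {f. f holomorphic_on UNIV \<and>
      bdd_above (range (\<lambda>n. p n * norm (taylor_coeff f n)))}"

definition hadamard :: "(nat \<Rightarrow> real) \<Rightarrow> (complex \<Rightarrow> complex) \<Rightarrow> (complex \<Rightarrow> complex) \<Rightarrow> complex \<Rightarrow> complex" where
  "hadamard p f g = (\<lambda>z. \<Sum>n. of_real (p n) * taylor_coeff f n * taylor_coeff g n * z ^ n)"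

definition A_ring :: "(nat \<Rightarrow> real) \<Rightarrow> (complex \<Rightarrow> complex) ring" where
  "A_ring p = \<lparr>carrier = A_carrier p,
               monoid.mult = hadamard p,
               one = (\<lambda>z. \<Sum>n. z ^ n / of_real (p n)),
               zero = (\<lambda>z. 0),
               add = (\<lambda>f g z. f z + g z)\<rparr>"

end

theory Submission
  imports Defs
begin

text \<open>The coefficient map \<open>f \<mapsto> (p n * taylor_coeff f n)\<^sub>n\<close> is a ring isomorphism from
  \<open>A_ring p\<close> onto the ring of bounded complex sequences with pointwise operations: the growth
  of \<open>p\<close> makes \<open>\<Sum>n. a n / p n * z ^ n\<close> entire for every bounded \<open>a\<close>, and the weighted Hadamard
  product becomes the pointwise product. So it suffices to find long chains of prime ideals of
  bounded sequences. Fix a free ultrafilter \<open>U\<close> on \<open>\<nat>\<close>. For \<open>0 < t n \<le> 1/2\<close> the bounded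
  sequences that, along \<open>U\<close>, are eventually below \<open>t n ^ M\<close> for every \<open>M\<close> form an ideal, which
  is prime because \<open>U\<close> decides every subset of \<open>\<nat>\<close>. For \<open>t\<^sub>k n = (1/2) ^ (n + 1) ^ k\<close> these
  ideals strictly decrease in \<open>k\<close>: \<open>t\<^sub>k\<^sub>+\<^sub>1 n \<le> t\<^sub>k n ^ M\<close> once \<open>n \<ge> M\<close>, whereas
  \<open>t\<^sub>k\<^sub>+\<^sub>1 n > t\<^sub>k\<^sub>+\<^sub>1 n ^ 2\<close>.\<close>

definition ultrafilter :: "'a filter \<Rightarrow> bool" where
  "ultrafilter U \<longleftrightarrow> U \<noteq> bot \<and> (\<forall>P. eventually P U \<or> eventually (\<lambda>x. \<not> P x) U)"

lemma Inf_chain_neq_bot: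
  fixes C :: "'a filter set"
  assumes "C \<noteq> {}" and chain: "\<And>F G. F \<in> C \<Longrightarrow> G \<in> C \<Longrightarrow> F \<le> G \<or> G \<le> F"
    and proper: "\<And>F. F \<in> C \<Longrightarrow> F \<noteq> bot"
  shows "Inf C \<noteq> bot"
proof -
  have "eventually P (Inf C) \<longleftrightarrow> (\<exists>F\<in>C. eventually P F)" for P
  proof (rule eventually_Inf_base[OF \<open>C \<noteq> {}\<close>])
    fix F G assume "F \<in> C" "G \<in> C"
    then show "\<exists>H\<in>C. H \<le> inf F G"
      using chain[of F G] by (metis inf.absorb1 inf.absorb2 order_refl)
  qed
  then show ?thesis
    using proper by (auto simp: trivial_limit_def)
qed

lemma ex_ultrafilter_le:
  fixes F :: "'a filter"
  assumes "F \<noteq> bot"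
  shows "\<exists>U. ultrafilter U \<and> U \<le> F"
proof -
  let ?R = "{(G, H). H \<noteq> bot \<and> H \<le> G \<and> G \<le> F}"
  have field: "Field ?R = {G. G \<noteq> bot \<and> G \<le> F}"
    using assms by (auto simp: Field_def bot_unique)
  have "\<exists>U\<in>Field ?R. \<forall>G\<in>Field ?R. (U, G) \<in> ?R \<longrightarrow> G = U"
  proof (rule Zorns_po_lemma)
    show "Partial_order ?R"
      by (auto simp: partial_order_on_def preorder_on_def
          antisym_def refl_on_def trans_def Field_def bot_unique)
    show "\<exists>U\<in>Field ?R. \<forall>G\<in>C. (G, U) \<in> ?R" if "C \<in> Chains ?R" for C
    proof (cases "C = {}")
      case True
      then show ?thesis using assms by (auto simp: field)
    next
      case False
      then obtain G where "G \<in> C" by blast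
      have "Inf C \<noteq> bot"
        using False \<open>C \<in> Chains ?R\<close> by (intro Inf_chain_neq_bot) (auto simp: Chains_def)
      moreover have "G \<le> F"
        using \<open>G \<in> C\<close> \<open>C \<in> Chains ?R\<close> by (auto simp: Chains_def)
      then have "Inf C \<le> F"
        using \<open>G \<in> C\<close> Inf_lower order_trans by blast
      ultimately show ?thesis
        using \<open>C \<in> Chains ?R\<close> by (intro bexI[of _ "Inf C"]) (auto simp: field Chains_def Inf_lower)
    qed
  qed
  then obtain U where U: "U \<noteq> bot" "U \<le> F"
    and maximal: "\<And>G. G \<noteq> bot \<Longrightarrow> G \<le> U \<Longrightarrow> G = U"
    unfolding field by auto
  have "eventually P U \<or> eventually (\<lambda>x. \<not> P x) U" for P
  proof (rule disjCI)
    assume "\<not> eventually (\<lambda>x. \<not> P x) U"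
    then have "inf U (principal {x. P x}) \<noteq> bot"
      by (simp add: trivial_limit_def eventually_inf_principal not_eventually)
    then have "inf U (principal {x. P x}) = U"
      by (rule maximal) simp
    moreover have "eventually P (inf U (principal {x. P x}))"
      by (simp add: eventually_inf_principal)
    ultimately show "eventually P U" by simp
  qed
  with U show ?thesis
    unfolding ultrafilter_def by blast
qed

definition bseq_ring :: "(nat \<Rightarrow> 'a::real_normed_field) ring" where
  "bseq_ring = \<lparr>carrier = {a. Bseq a}, monoid.mult = (\<lambda>a b n. a n * b n), one = (\<lambda>n. 1),
     zero = (\<lambda>n. 0), add = (\<lambda>a b n. a n + b n)\<rparr>"

lemma bseq_ring_simps:
  "carrier bseq_ring = {a. Bseq a}"
  "a \<otimes>\<^bsub>bseq_ring\<^esub> b = (\<lambda>n. a n * b n)"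
  "a \<oplus>\<^bsub>bseq_ring\<^esub> b = (\<lambda>n. a n + b n)"
  "\<one>\<^bsub>bseq_ring\<^esub> = (\<lambda>n. 1)"
  "\<zero>\<^bsub>bseq_ring\<^esub> = (\<lambda>n. 0)"
  by (simp_all add: bseq_ring_def)

lemma Bseq_const_fun: "Bseq (\<lambda>n. c)"
  by (simp add: Bseq_conv_Bfun)

lemma Bseq_add_Bseq:
  fixes f g :: "nat \<Rightarrow> 'a::real_normed_vector"
  assumes "Bseq f" and "Bseq g"
  shows "Bseq (\<lambda>n. f n + g n)"
proof -
  from assms obtain K L where "\<And>n. norm (f n) \<le> K" "\<And>n. norm (g n) \<le> L"
    by (meson BseqE)
  then have "norm (f n + g n) \<le> K + L" for n
    by (meson add_mono norm_triangle_le)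
  then show ?thesis by (rule BseqI')
qed

lemma cring_bseq_ring: "cring (bseq_ring :: (nat \<Rightarrow> 'a::real_normed_field) ring)"
proof (rule cringI)
  show "abelian_group (bseq_ring :: (nat \<Rightarrow> 'a) ring)"
  proof (rule abelian_groupI)
    show "\<exists>y\<in>carrier bseq_ring. y \<oplus>\<^bsub>bseq_ring\<^esub> a = \<zero>\<^bsub>bseq_ring\<^esub>"
      if "a \<in> carrier (bseq_ring :: (nat \<Rightarrow> 'a) ring)" for a
      using that by (intro bexI[of _ "\<lambda>n. - a n"]) (auto simp: bseq_ring_simps Bseq_minus_iff)
  qed (auto simp: bseq_ring_simps Bseq_add_Bseq Bseq_const_fun algebra_simps)
  show "comm_monoid (bseq_ring :: (nat \<Rightarrow> 'a) ring)"
    by (rule comm_monoidI) (auto simp: bseq_ring_simps Bseq_mult Bseq_const_fun algebra_simps)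
qed (simp add: bseq_ring_simps algebra_simps)

lemma bseq_ring_a_inv:
  assumes "Bseq a"
  shows "\<ominus>\<^bsub>(bseq_ring :: (nat \<Rightarrow> 'a::real_normed_field) ring)\<^esub> a = (\<lambda>n. - a n)"
proof -
  interpret cring "bseq_ring :: (nat \<Rightarrow> 'a) ring" by (rule cring_bseq_ring)
  show ?thesis
    using assms by (intro minus_equality) (auto simp: bseq_ring_simps Bseq_minus_iff)
qed

definition decay_ideal :: "nat filter \<Rightarrow> (nat \<Rightarrow> real) \<Rightarrow> (nat \<Rightarrow> 'a::real_normed_vector) set" where
  "decay_ideal U t = {a. Bseq a \<and> (\<forall>M. eventually (\<lambda>n. norm (a n) \<le> t n ^ M) U)}"

lemma decay_ideal_mono:
  assumes "\<And>n. 0 \<le> s n" and "\<And>n. s n \<le> t n"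
  shows "decay_ideal U s \<subseteq> decay_ideal U t"
proof
  fix a assume a: "a \<in> decay_ideal U s"
  have "eventually (\<lambda>n. norm (a n) \<le> t n ^ M) U" for M
  proof -
    have "eventually (\<lambda>n. norm (a n) \<le> s n ^ M) U"
      using a by (simp add: decay_ideal_def)
    moreover have "s n ^ M \<le> t n ^ M" for n
      using assms by (simp add: power_mono)
    ultimately show ?thesis
      by (elim eventually_mono) (rule order_trans)
  qed
  with a show "a \<in> decay_ideal U t"
    by (simp add: decay_ideal_def)
qed

lemma not_in_decay_ideal:
  assumes "U \<noteq> bot" and "\<And>n. 0 < t n" and "\<And>n. t n < 1" and "\<And>n. t n \<le> norm (a n)"
  shows "a \<notin> decay_ideal U t"
proof
  assume "a \<in> decay_ideal U t"
  then have "eventually (\<lambda>n. norm (a n) \<le> t n ^ 2) U"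
    by (simp add: decay_ideal_def)
  moreover have "t n ^ 2 < t n" for n
    using assms(2,3)[of n] by (simp add: power2_eq_square)
  ultimately have "eventually (\<lambda>n. False) U"
    using assms(4) by (elim eventually_mono) (meson order_trans not_le)
  with \<open>U \<noteq> bot\<close> show False
    by simp
qed

context
  fixes U :: "nat filter" and t :: "nat \<Rightarrow> real"
  assumes U: "ultrafilter U" and t_pos: "\<And>n. 0 < t n" and t_le_half: "\<And>n. t n \<le> 1/2"
begin

lemma zero_in_decay_ideal: "(\<lambda>n. 0) \<in> decay_ideal U t"
  using t_pos by (simp add: decay_ideal_def Bseq_const_fun less_imp_le)

lemma decay_ideal_neg:
  assumes "a \<in> decay_ideal U t"
  shows "\<ominus>\<^bsub>(bseq_ring :: (nat \<Rightarrow> 'a::real_normed_field) ring)\<^esub> a \<in> decay_ideal U t"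
  using assms bseq_ring_a_inv[of a] by (simp add: decay_ideal_def Bseq_minus_iff)

lemma decay_ideal_add:
  assumes "a \<in> decay_ideal U t" and "b \<in> decay_ideal U t"
  shows "(\<lambda>n. a n + b n) \<in> decay_ideal U t"
proof -
  have "eventually (\<lambda>n. norm (a n + b n) \<le> t n ^ M) U" for M
  proof -
    have "eventually (\<lambda>n. norm (a n) \<le> t n ^ Suc M \<and> norm (b n) \<le> t n ^ Suc M) U"
      using assms unfolding decay_ideal_def by (intro eventually_conj) blast+
    then show ?thesis
    proof (rule eventually_mono)
      fix n assume "norm (a n) \<le> t n ^ Suc M \<and> norm (b n) \<le> t n ^ Suc M"
      then have "norm (a n + b n) \<le> 2 * t n * t n ^ M"
        using norm_triangle_ineq[of "a n" "b n"] by simp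
      also have "\<dots> \<le> t n ^ M"
        using t_pos[of n] t_le_half[of n] mult_right_mono[of "2 * t n" 1 "t n ^ M"] by simp
      finally show "norm (a n + b n) \<le> t n ^ M" .
    qed
  qed
  with assms show ?thesis
    by (simp add: decay_ideal_def Bseq_add_Bseq)
qed

lemma decay_ideal_mult_Bseq:
  fixes a c :: "nat \<Rightarrow> 'a::real_normed_field"
  assumes "a \<in> decay_ideal U t" and "Bseq c"
  shows "(\<lambda>n. c n * a n) \<in> decay_ideal U t"
proof -
  obtain C where C: "0 < C" "\<And>n. norm (c n) \<le> C"
    using \<open>Bseq c\<close> by (meson BseqE)
  obtain K where K: "C < 2 ^ K"
    using real_arch_pow[of 2 C] by auto
  have "eventually (\<lambda>n. norm (c n * a n) \<le> t n ^ M) U" for M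
  proof -
    have "eventually (\<lambda>n. norm (a n) \<le> t n ^ (K + M)) U"
      using assms by (simp add: decay_ideal_def)
    then show ?thesis
    proof (rule eventually_mono)
      fix n assume a: "norm (a n) \<le> t n ^ (K + M)"
      have t: "0 < t n" "2 * t n \<le> 1"
        using t_pos[of n] t_le_half[of n] by auto
      have "norm (c n) \<le> 2 ^ K"
        using C(2)[of n] K by linarith
      then have "norm (c n * a n) \<le> 2 ^ K * t n ^ (K + M)"
        unfolding norm_mult using a by (intro mult_mono) auto
      also have "\<dots> = (2 * t n) ^ K * t n ^ M"
        by (simp add: power_add power_mult_distrib)
      also have "\<dots> \<le> 1 * t n ^ M"
        using t by (intro mult_right_mono power_le_one) auto
      finally show "norm (c n * a n) \<le> t n ^ M"
        by simp
    qed
  qed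
  with assms show ?thesis
    by (simp add: decay_ideal_def Bseq_mult)
qed

lemma decay_ideal_prime:
  fixes a b :: "nat \<Rightarrow> 'a::real_normed_div_algebra"
  assumes "Bseq a" and "Bseq b" and "(\<lambda>n. a n * b n) \<in> decay_ideal U t"
  shows "a \<in> decay_ideal U t \<or> b \<in> decay_ideal U t"
proof (rule ccontr)
  assume "\<not> ?thesis"
  then obtain M1 M2 where "\<not> eventually (\<lambda>n. norm (a n) \<le> t n ^ M1) U"
    and "\<not> eventually (\<lambda>n. norm (b n) \<le> t n ^ M2) U"
    using assms by (auto simp: decay_ideal_def)
  then have "eventually (\<lambda>n. \<not> norm (a n) \<le> t n ^ M1) U"
    and "eventually (\<lambda>n. \<not> norm (b n) \<le> t n ^ M2) U"
    using U unfolding ultrafilter_def by blast+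
  moreover have "eventually (\<lambda>n. norm (a n * b n) \<le> t n ^ (M1 + M2)) U"
    using assms by (simp add: decay_ideal_def)
  ultimately have "eventually (\<lambda>n. False) U"
  proof eventually_elim
    case (elim n)
    have "t n ^ M1 * t n ^ M2 < norm (a n) * norm (b n)"
      using elim t_pos[of n] by (intro mult_strict_mono) (auto simp: not_le)
    with elim show False
      by (simp add: power_add norm_mult)
  qed
  with U show False
    by (simp add: ultrafilter_def)
qed

lemma primeideal_decay_ideal:
  "primeideal (decay_ideal U t) (bseq_ring :: (nat \<Rightarrow> 'a::real_normed_field) ring)"
proof -
  interpret R: cring "bseq_ring :: (nat \<Rightarrow> 'a) ring" by (rule cring_bseq_ring)
  have t_less_one: "t n < 1" for n
    using t_le_half[of n] by linarith
  have sub: "decay_ideal U t \<subseteq> carrier (bseq_ring :: (nat \<Rightarrow> 'a) ring)"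
    by (auto simp: decay_ideal_def bseq_ring_simps)
  have "subgroup (decay_ideal U t) (add_monoid (bseq_ring :: (nat \<Rightarrow> 'a) ring))"
    using sub zero_in_decay_ideal decay_ideal_add decay_ideal_neg
    by (intro R.add.subgroupI) (auto simp: bseq_ring_simps)
  then have "ideal (decay_ideal U t) (bseq_ring :: (nat \<Rightarrow> 'a) ring)"
    by (rule idealI[OF R.ring_axioms])
       (auto simp: bseq_ring_simps intro: decay_ideal_mult_Bseq, subst mult.commute,
        auto intro: decay_ideal_mult_Bseq)
  moreover have "(\<lambda>n. 1 :: 'a) \<notin> decay_ideal U t"
    using U t_pos t_less_one by (intro not_in_decay_ideal) (auto simp: ultrafilter_def less_imp_le)
  then have "carrier (bseq_ring :: (nat \<Rightarrow> 'a) ring) \<noteq> decay_ideal U t"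
    by (auto simp: bseq_ring_simps Bseq_const_fun)
  ultimately show ?thesis
    by (rule primeidealI[OF _ R.is_cring]) (auto simp: bseq_ring_simps decay_ideal_prime)
qed

end

definition decay_scale :: "nat \<Rightarrow> nat \<Rightarrow> real" where
  "decay_scale k n = (1/2) ^ ((n + 1) ^ k)"

lemma decay_scale_pos: "0 < decay_scale k n"
  by (simp add: decay_scale_def)

lemma decay_scale_le_half: "decay_scale k n \<le> 1/2"
  unfolding decay_scale_def using power_decreasing[of 1 "(n + 1) ^ k" "1/2 :: real"] by simp

lemma decay_scale_Suc_le: "decay_scale (Suc k) n \<le> decay_scale k n"
  unfolding decay_scale_def by (rule power_decreasing) (auto intro: power_increasing)

lemma decay_ideal_decay_scale_strict_mono:
  assumes "U \<noteq> bot" and "U \<le> sequentially"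
  shows "decay_ideal U (decay_scale (Suc k))
    \<subset> (decay_ideal U (decay_scale k) :: (nat \<Rightarrow> 'a::real_normed_algebra_1) set)"
proof -
  let ?a = "\<lambda>n. of_real (decay_scale (Suc k) n) :: 'a"
  have norm_a: "norm (?a n) = decay_scale (Suc k) n" for n
    using decay_scale_pos[of "Suc k" n] by simp
  have "eventually (\<lambda>n. norm (?a n) \<le> decay_scale k n ^ M) U" for M
  proof (rule filter_leD[OF \<open>U \<le> sequentially\<close>])
    show "eventually (\<lambda>n. norm (?a n) \<le> decay_scale k n ^ M) sequentially"
      using eventually_ge_at_top[of M]
    proof eventually_elim
      case (elim n)
      then have "(n + 1) ^ k * M \<le> (n + 1) ^ k * (n + 1)"
        by (intro mult_left_mono) auto
      then have "(1/2 :: real) ^ ((n + 1) ^ Suc k) \<le> (1/2) ^ ((n + 1) ^ k * M)"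
        by (intro power_decreasing) (auto simp: mult.commute)
      then show ?case
        unfolding norm_a by (simp add: decay_scale_def power_mult)
    qed
  qed
  moreover have "Bseq ?a"
    using decay_scale_pos decay_scale_le_half by (intro BseqI'[of _ "1/2"]) (simp add: less_imp_le)
  ultimately have "?a \<in> decay_ideal U (decay_scale k)"
    by (simp add: decay_ideal_def)
  moreover have "?a \<notin> decay_ideal U (decay_scale (Suc k))"
  proof (rule not_in_decay_ideal)
    show "decay_scale (Suc k) n < 1" for n
      using decay_scale_le_half[of "Suc k" n] by linarith
  qed (use assms(1) decay_scale_pos norm_a in auto)
  moreover have "decay_ideal U (decay_scale (Suc k)) \<subseteq> decay_ideal U (decay_scale k)"
    by (rule decay_ideal_mono) (auto simp: decay_scale_Suc_le less_imp_le decay_scale_pos)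
  ultimately show ?thesis
    by blast
qed

lemma cring_surj_hom_image:
  assumes "cring S" and surj: "h ` carrier S = carrier R"
    and add: "\<And>a b. a \<in> carrier S \<Longrightarrow> b \<in> carrier S \<Longrightarrow> h (a \<oplus>\<^bsub>S\<^esub> b) = h a \<oplus>\<^bsub>R\<^esub> h b"
    and mult: "\<And>a b. a \<in> carrier S \<Longrightarrow> b \<in> carrier S \<Longrightarrow> h (a \<otimes>\<^bsub>S\<^esub> b) = h a \<otimes>\<^bsub>R\<^esub> h b"
    and one: "h \<one>\<^bsub>S\<^esub> = \<one>\<^bsub>R\<^esub>" and zero: "h \<zero>\<^bsub>S\<^esub> = \<zero>\<^bsub>R\<^esub>"
  shows "cring R"
proof -
  interpret S: cring S by fact
  have carrier_R: "carrier R = h ` carrier S"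
    using surj by simp
  show ?thesis
  proof (rule cringI)
    show "abelian_group R"
    proof (rule abelian_groupI, unfold carrier_R)
      show "\<exists>y\<in>h ` carrier S. y \<oplus>\<^bsub>R\<^esub> x = \<zero>\<^bsub>R\<^esub>" if x: "x \<in> h ` carrier S" for x
      proof -
        obtain a where a: "x = h a" "a \<in> carrier S"
          using x by blast
        have "h (\<ominus>\<^bsub>S\<^esub> a) \<oplus>\<^bsub>R\<^esub> x = h (\<ominus>\<^bsub>S\<^esub> a \<oplus>\<^bsub>S\<^esub> a)"
          using a by (simp add: add)
        also have "\<dots> = \<zero>\<^bsub>R\<^esub>"
          using a(2) by (simp add: S.l_neg zero)
        finally have "h (\<ominus>\<^bsub>S\<^esub> a) \<oplus>\<^bsub>R\<^esub> x = \<zero>\<^bsub>R\<^esub>" .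
        moreover have "h (\<ominus>\<^bsub>S\<^esub> a) \<in> h ` carrier S"
          using a(2) by (intro imageI S.a_inv_closed)
        ultimately show ?thesis
          by (rule bexI)
      qed
    qed (auto simp: add[symmetric] zero[symmetric] S.a_ac)
    show "comm_monoid R"
      by (rule comm_monoidI, unfold carrier_R) (auto simp: mult[symmetric] one[symmetric] S.m_ac)
  qed (unfold carrier_R, auto simp: add[symmetric] mult[symmetric] S.l_distr)
qed

definition coeff_seq :: "(nat \<Rightarrow> real) \<Rightarrow> (complex \<Rightarrow> complex) \<Rightarrow> nat \<Rightarrow> complex" where
  "coeff_seq p f n = of_real (p n) * taylor_coeff f n"

definition coeff_series :: "(nat \<Rightarrow> real) \<Rightarrow> (nat \<Rightarrow> complex) \<Rightarrow> complex \<Rightarrow> complex" where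
  "coeff_series p a = (\<lambda>z. \<Sum>n. a n / of_real (p n) * z ^ n)"

lemma coeff_series_coeff_seq:
  assumes "f holomorphic_on UNIV" and "\<And>n. p n \<noteq> 0"
  shows "coeff_series p (coeff_seq p f) = f"
proof
  fix z
  have "(\<lambda>n. (deriv ^^ n) f 0 / fact n * (z - 0) ^ n) sums f z"
    using assms(1) by (intro holomorphic_power_series[of f 0 "norm z + 1"])
      (auto intro: holomorphic_on_subset)
  then have "(\<lambda>n. taylor_coeff f n * z ^ n) sums f z"
    by (simp add: taylor_coeff_def)
  then show "coeff_series p (coeff_seq p f) z = f z"
    using assms(2) by (simp add: coeff_series_def coeff_seq_def sums_iff)
qed

lemma Bseq_coeff_seq:
  assumes "f \<in> A_carrier p" and "\<And>n. 0 < p n"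
  shows "Bseq (coeff_seq p f)"
proof -
  obtain C where "\<And>n. p n * norm (taylor_coeff f n) \<le> C"
    using assms(1) unfolding A_carrier_def bdd_above_def by auto
  then show ?thesis
    using assms(2) by (intro BseqI'[of _ C]) (simp add: coeff_seq_def norm_mult less_imp_le)
qed

context
  fixes p :: "nat \<Rightarrow> real"
  assumes pos: "\<And>n. 0 < p n"
    and growth: "filterlim (\<lambda>n. root n (p n)) at_top sequentially"
begin

lemma eventually_power_le_weight:
  assumes "0 \<le> K"
  shows "eventually (\<lambda>n. K ^ n \<le> p n) sequentially"
  using eventually_gt_at_top[of 0] growth[unfolded filterlim_at_top, rule_format, of K]
proof eventually_elim
  case (elim n)
  then have "K ^ n \<le> root n (p n) ^ n"
    using assms by (intro power_mono) auto
  also have "\<dots> = p n"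
    using elim pos[of n] by simp
  finally show ?case .
qed

lemma summable_coeff_series:
  fixes a :: "nat \<Rightarrow> complex"
  assumes "Bseq a"
  shows "summable (\<lambda>n. a n / of_real (p n) * z ^ n)"
proof -
  obtain C where C: "0 < C" "\<And>n. norm (a n) \<le> C"
    using assms by (meson BseqE)
  define K where "K = 2 * norm z + 2"
  have K0: "0 < K"
    unfolding K_def using norm_ge_zero[of z] by linarith
  have K: "0 < K" "norm z / K \<le> 1/2"
    using K0 unfolding pos_divide_le_eq[OF K0] by (simp_all add: K_def)
  have "eventually (\<lambda>n. norm (a n / of_real (p n) * z ^ n) \<le> C * (1/2) ^ n) sequentially"
    using eventually_power_le_weight[OF less_imp_le[OF K(1)]]
  proof eventually_elim
    case (elim n)
    have "norm (a n / of_real (p n) * z ^ n) = norm (a n) * (norm z ^ n / p n)"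
      using pos[of n] by (simp add: norm_mult norm_divide norm_power)
    also have "\<dots> \<le> C * (norm z ^ n / K ^ n)"
      using C elim K(1) pos[of n] by (intro mult_mono divide_left_mono) auto
    also have "\<dots> \<le> C * (1/2) ^ n"
      using C(1) K by (auto simp: power_divide[symmetric] intro!: mult_left_mono power_mono)
    finally show ?case .
  qed
  moreover have "summable (\<lambda>n. C * (1/2 :: real) ^ n)"
    by (intro summable_mult summable_geometric) auto
  ultimately show ?thesis
    by (rule summable_comparison_test_ev)
qed

lemma coeff_series_holomorphic_and_taylor_coeff:
  assumes "Bseq a"
  shows "coeff_series p a holomorphic_on UNIV"
    and "taylor_coeff (coeff_series p a) n = a n / of_real (p n)"
proof -
  define F where "F = Abs_fps (\<lambda>n. a n / of_real (p n))"
  have series: "coeff_series p a = eval_fps F"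
    by (simp add: coeff_series_def eval_fps_def F_def fun_eq_iff)
  have radius: "ereal (norm z) < fps_conv_radius F" for z :: complex
  proof -
    have "ereal (norm z) < ereal (norm z + 1)"
      by simp
    also have "\<dots> \<le> fps_conv_radius F"
      using conv_radius_geI[of "fps_nth F" "of_real (norm z + 1)"] summable_coeff_series[OF assms]
      by (simp add: F_def fps_conv_radius_def)
    finally show ?thesis .
  qed
  show "coeff_series p a holomorphic_on UNIV"
    unfolding series by (rule holomorphic_on_eval_fps) (use radius in \<open>auto simp: eball_def\<close>)
  have "eval_fps F has_fps_expansion F"
    using radius[of 0] by (intro eval_fps_has_fps_expansion) (simp add: zero_ereal_def)
  from fps_nth_fps_expansion[OF this, of n]
  show "taylor_coeff (coeff_series p a) n = a n / of_real (p n)"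
    by (simp add: taylor_coeff_def series F_def)
qed

lemma coeff_seq_coeff_series:
  assumes "Bseq a"
  shows "coeff_seq p (coeff_series p a) = a"
  using pos by (simp add: coeff_seq_def coeff_series_holomorphic_and_taylor_coeff(2)[OF assms]
      fun_eq_iff less_imp_neq[symmetric])

lemma A_carrier_eq_image_coeff_series: "A_carrier p = coeff_series p ` {a. Bseq a}"
proof (intro equalityI subsetI)
  fix f assume "f \<in> A_carrier p"
  then show "f \<in> coeff_series p ` {a. Bseq a}"
    using Bseq_coeff_seq[of f p] coeff_series_coeff_seq[of f p] pos
    by (intro image_eqI[of _ _ "coeff_seq p f"]) (auto simp: A_carrier_def less_imp_neq[symmetric])
next
  fix f assume "f \<in> coeff_series p ` {a. Bseq a}"
  then obtain a where a: "Bseq a" "f = coeff_series p a"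
    by blast
  have "p n * norm (taylor_coeff f n) = norm (a n)" for n
    using fun_cong[OF coeff_seq_coeff_series[OF a(1)], of n] pos[of n]
    unfolding a(2) coeff_seq_def by (metis abs_of_pos norm_mult norm_of_real)
  then have "bdd_above (range (\<lambda>n. p n * norm (taylor_coeff f n)))"
    using Bseq_bdd_above'[OF a(1)] by simp
  then show "f \<in> A_carrier p"
    using a coeff_series_holomorphic_and_taylor_coeff(1) by (simp add: A_carrier_def)
qed

lemma coeff_series_add:
  assumes "Bseq a" and "Bseq b"
  shows "coeff_series p (\<lambda>n. a n + b n) = (\<lambda>z. coeff_series p a z + coeff_series p b z)"
proof
  fix z
  show "coeff_series p (\<lambda>n. a n + b n) z = coeff_series p a z + coeff_series p b z"
    using suminf_add[OF summable_coeff_series[OF assms(1)] summable_coeff_series[OF assms(2)]]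
    by (simp add: coeff_series_def add_divide_distrib distrib_right)
qed

lemma hadamard_coeff_series:
  assumes "Bseq a" and "Bseq b"
  shows "hadamard p (coeff_series p a) (coeff_series p b) = coeff_series p (\<lambda>n. a n * b n)"
proof -
  have coeff: "of_real (p n) * (a n / of_real (p n)) * (b n / of_real (p n))
      = a n * b n / of_real (p n)" for n
    using pos[of n] by (simp add: field_simps)
  show ?thesis
    unfolding hadamard_def coeff_series_holomorphic_and_taylor_coeff(2)[OF assms(1)]
      coeff_series_holomorphic_and_taylor_coeff(2)[OF assms(2)] coeff
    unfolding coeff_series_def ..
qed

lemma A_ring_simps:
  "carrier (A_ring p) = coeff_series p ` {a. Bseq a}"
  "f \<otimes>\<^bsub>A_ring p\<^esub> g = hadamard p f g"
  "f \<oplus>\<^bsub>A_ring p\<^esub> g = (\<lambda>z. f z + g z)"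
  by (simp_all add: A_ring_def A_carrier_eq_image_coeff_series)

lemma one_A_ring: "\<one>\<^bsub>A_ring p\<^esub> = coeff_series p (\<lambda>n. 1)"
  by (simp add: A_ring_def coeff_series_def)

lemma zero_A_ring: "\<zero>\<^bsub>A_ring p\<^esub> = coeff_series p (\<lambda>n. 0)"
  by (simp add: A_ring_def coeff_series_def)

lemma cring_A_ring: "cring (A_ring p)"
  by (rule cring_surj_hom_image[OF cring_bseq_ring, of "coeff_series p"])
    (simp_all add: bseq_ring_simps A_ring_simps one_A_ring zero_A_ring
      coeff_series_add hadamard_coeff_series)

lemma coeff_seq_ring_hom: "coeff_seq p \<in> ring_hom (A_ring p) bseq_ring"
proof (rule ring_hom_memI)
  show "coeff_seq p f \<in> carrier bseq_ring" if "f \<in> carrier (A_ring p)" for f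
    using that by (auto simp: A_ring_simps bseq_ring_simps coeff_seq_coeff_series)
  show "coeff_seq p (f \<otimes>\<^bsub>A_ring p\<^esub> g) = coeff_seq p f \<otimes>\<^bsub>bseq_ring\<^esub> coeff_seq p g"
    if "f \<in> carrier (A_ring p)" and "g \<in> carrier (A_ring p)" for f g
    using that by (auto simp: A_ring_simps bseq_ring_simps coeff_seq_coeff_series Bseq_mult
        hadamard_coeff_series)
  show "coeff_seq p (f \<oplus>\<^bsub>A_ring p\<^esub> g) = coeff_seq p f \<oplus>\<^bsub>bseq_ring\<^esub> coeff_seq p g"
    if "f \<in> carrier (A_ring p)" and "g \<in> carrier (A_ring p)" for f g
    using that by (auto simp: A_ring_simps bseq_ring_simps coeff_seq_coeff_series Bseq_add_Bseq
        coeff_series_add[symmetric])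
  show "coeff_seq p \<one>\<^bsub>A_ring p\<^esub> = \<one>\<^bsub>bseq_ring\<^esub>"
    by (simp add: one_A_ring bseq_ring_simps coeff_seq_coeff_series Bseq_const_fun)
qed

lemma coeff_seq_vimage_psubset:
  assumes "Q \<subset> Q'" and "Q' \<subseteq> {a. Bseq a}"
  shows "{f \<in> carrier (A_ring p). coeff_seq p f \<in> Q} \<subset> {f \<in> carrier (A_ring p). coeff_seq p f \<in> Q'}"
proof -
  obtain a where a: "a \<in> Q'" "a \<notin> Q"
    using assms(1) by blast
  then have "Bseq a"
    using assms(2) by blast
  then have "coeff_series p a \<in> carrier (A_ring p)" "coeff_seq p (coeff_series p a) = a"
    by (simp_all add: A_ring_simps coeff_seq_coeff_series)
  with a have "coeff_series p a \<in> {f \<in> carrier (A_ring p). coeff_seq p f \<in> Q'}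
      - {f \<in> carrier (A_ring p). coeff_seq p f \<in> Q}"
    by simp
  moreover have "{f \<in> carrier (A_ring p). coeff_seq p f \<in> Q} \<subseteq> {f \<in> carrier (A_ring p). coeff_seq p f \<in> Q'}"
    using assms(1) by blast
  ultimately show ?thesis
    by blast
qed

end

theorem mainTheorem13:
  fixes p :: "nat \<Rightarrow> real"
  assumes pos: "\<And>n. p n > 0"
    and growth: "filterlim (\<lambda>n. root n (p n)) at_top sequentially"
  shows "\<forall>N::nat. \<exists>P :: nat \<Rightarrow> (complex \<Rightarrow> complex) set.
           (\<forall>i\<in>{1..N+1}. primeideal (P i) (A_ring p)) \<and>
           (\<forall>i\<in>{1..N}. P (i + 1) \<subset> P i)"
proof -
  obtain U :: "nat filter" where U: "ultrafilter U" "U \<le> sequentially"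
    using ex_ultrafilter_le[of sequentially] by auto
  define Q :: "nat \<Rightarrow> (nat \<Rightarrow> complex) set" where "Q i = decay_ideal U (decay_scale i)" for i
  define P where "P i = {f \<in> carrier (A_ring p). coeff_seq p f \<in> Q i}" for i
  interpret hom: ring_hom_ring "A_ring p" bseq_ring "coeff_seq p"
    using cring_A_ring[OF pos growth] cring_bseq_ring coeff_seq_ring_hom[OF pos growth]
    by (intro ring_hom_ringI2) (auto simp: cring_def)
  have "primeideal (P i) (A_ring p)" for i
    unfolding P_def Q_def using U(1) decay_scale_pos decay_scale_le_half
    by (intro hom.primeideal_vimage cring_A_ring[OF pos growth] primeideal_decay_ideal)
  moreover have "P (Suc i) \<subset> P i" for i
    unfolding P_def Q_def using U
    by (intro coeff_seq_vimage_psubset[OF pos growth] decay_ideal_decay_scale_strict_mono)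
      (auto simp: ultrafilter_def decay_ideal_def)
  ultimately show ?thesis
    by (intro allI exI[of _ P] conjI ballI) simp_all
qed

end
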